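(* Let $m\ge0$ and $k\ge1$ be integers and $n\ge0$. Then $$\lim_{q\to-1}\frac{\sum_{j=0}^{2n}q^{(2m+1)j}\begin{bmatrix} 2n\\ j\end{bmatrix}_{q^{2k}}}{(-q;q^2)_n}=(2k)^n,\qquad \lim_{q\to-1}\frac{\sum_{j=0}^{2n+1}q^{(2m+1)j}\begin{bmatrix} 2n+1\\ j\end{bmatrix}_{q^{2k}}}{(-q;q^2)_{n+1}}=(2k)^n(2m+1).$$
   Context: $(x;q)_n=\prod_{j=0}^{n-1}(1-q^jx)$. The Gaussian binomial coefficient is $\begin{bmatrix} n\\ j\end{bmatrix}_q=\frac{(q;q)_n}{(q;q)_j(q;q)_{n-j}}$ for $0\le j\le n$, a polynomial in $q$; $\begin{bmatrix} n\\ j\end{bmatrix}_{q^{2k}}$ is this with $q$ replaced by $q^{2k}$. The quotients are rational functions of $q$ and the limits are taken as $q\to-1$. *)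

theory Defs
  imports Complex_Main
begin

definition qpoch :: "real \<Rightarrow> real \<Rightarrow> nat \<Rightarrow> real" where
  "qpoch x q n = (\<Prod>j<n. 1 - q ^ j * x)"

definition gauss_binom :: "nat \<Rightarrow> nat \<Rightarrow> real \<Rightarrow> real" where
  "gauss_binom n j q = qpoch q q n / (qpoch q q j * qpoch q q (n - j))"

end

theory Submission
  imports Defs
begin

text \<open>
  With \<open>p = q\<^sup>2\<^sup>k\<close> and \<open>z = q\<^sup>2\<^sup>m\<^sup>+\<^sup>1\<close> both sums are Rogers-Szego polynomials
  \<open>H\<^sub>N = \<Sum>\<^sub>j [N j]\<^sub>p z\<^sup>j\<close>, which satisfy
  \<open>H\<^sub>N\<^sub>+\<^sub>2 = (1 + z) H\<^sub>N\<^sub>+\<^sub>1 - z (1 - p\<^sup>N\<^sup>+\<^sup>1) H\<^sub>N\<close>.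
  Dividing by \<open>(-q;q\<^sup>2)\<^sub>d\<^sub>+\<^sub>1 = (-q;q\<^sup>2)\<^sub>d (1 + q\<^sup>2\<^sup>d\<^sup>+\<^sup>1)\<close>, every coefficient of the
  recurrence becomes a quotient \<open>(1 - (-q)\<^sup>a) / (1 - (-q)\<^sup>b)\<close>, which tends to \<open>a / b\<close>
  as \<open>q \<rightarrow> -1\<close>. The two limits then follow by a simultaneous induction on \<open>n\<close>: the odd quotient
  of the previous level enters the even step only multiplied by \<open>1 + q\<^sup>2\<^sup>n\<^sup>+\<^sup>1 \<rightarrow> 0\<close>.
\<close>

lemma qpoch_Suc: "qpoch x q (Suc n) = qpoch x q n * (1 - q ^ n * x)"
  by (simp add: qpoch_def)

lemma qpoch_0 [simp]: "qpoch x q 0 = 1"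
  by (simp add: qpoch_def)

lemma qpoch_self_Suc: "qpoch p p (Suc n) = qpoch p p n * (1 - p ^ Suc n)"
  by (simp add: qpoch_Suc mult.commute)

lemma power_Suc_neq_1: "\<bar>p :: real\<bar> \<noteq> 1 \<Longrightarrow> p ^ Suc i \<noteq> 1"
  using power_eq_1_iff[of p "Suc i"] by auto

lemma qpoch_self_nonzero: "\<bar>p :: real\<bar> \<noteq> 1 \<Longrightarrow> qpoch p p j \<noteq> 0"
  by (induction j) (auto simp: qpoch_Suc mult.commute[of _ p] dest: power_Suc_neq_1)

text \<open>\<open>gauss_binom N j p\<close> is junk for \<open>j > N\<close> (it equals \<open>(p;p)\<^sub>N / (p;p)\<^sub>j\<close>), so it is extended by
  zero there; the \<open>q\<close>-Pascal rule below needs exactly this convention at the boundary.\<close>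

definition qbinom :: "nat \<Rightarrow> nat \<Rightarrow> real \<Rightarrow> real" where
  "qbinom N j p = (if j \<le> N then gauss_binom N j p else 0)"

lemma qbinom_gt [simp]: "N < j \<Longrightarrow> qbinom N j p = 0"
  by (simp add: qbinom_def)

lemma qbinom_0 [simp]: "\<bar>p\<bar> \<noteq> 1 \<Longrightarrow> qbinom N 0 p = 1"
  using qpoch_self_nonzero[of p N] by (simp add: qbinom_def gauss_binom_def qpoch_def)

lemma qbinom_self [simp]: "\<bar>p\<bar> \<noteq> 1 \<Longrightarrow> qbinom N N p = 1"
  using qpoch_self_nonzero[of p N] by (simp add: qbinom_def gauss_binom_def qpoch_def)

lemma qbinom_Suc_Suc:
  assumes p: "\<bar>p\<bar> \<noteq> 1"
  shows "qbinom (Suc N) (Suc j) p = qbinom N (Suc j) p + p ^ (N - j) * qbinom N j p"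
proof (cases "j < N")
  case True
  then obtain r where N: "N = j + Suc r"
    using less_imp_Suc_add[OF True] by auto
  have nz: "qpoch p p j \<noteq> 0" "qpoch p p r \<noteq> 0" "1 - p ^ Suc j \<noteq> 0" "1 - p ^ Suc r \<noteq> 0"
    using qpoch_self_nonzero[OF p] power_Suc_neq_1[OF p] by auto
  have pow: "p ^ (N - j) = p ^ Suc r" "p ^ Suc N = p ^ Suc j * p ^ Suc r"
    by (simp_all add: N power_add[symmetric])
  have binoms: "qbinom (Suc N) (Suc j) p = qpoch p p (Suc N) / (qpoch p p (Suc j) * qpoch p p (Suc r))"
       "qbinom N (Suc j) p = qpoch p p N / (qpoch p p (Suc j) * qpoch p p r)"
       "qbinom N j p = qpoch p p N / (qpoch p p j * qpoch p p (Suc r))"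
    by (simp_all add: N qbinom_def gauss_binom_def)
  have "C * (1 - X * Y) / (A * (1 - X) * (B * (1 - Y)))
          = C / (A * (1 - X) * B) + Y * (C / (A * (B * (1 - Y))))"
    if "A \<noteq> 0" "B \<noteq> 0" "1 - X \<noteq> 0" "1 - Y \<noteq> 0" for A B C X Y :: real
  proof -
    have "C / (A * (1 - X) * B) + Y * (C / (A * (B * (1 - Y))))
            = (C * (1 - Y) + Y * C * (1 - X)) / (A * (1 - X) * (B * (1 - Y)))"
      using that by (simp add: add_divide_distrib)
    also have "C * (1 - Y) + Y * C * (1 - X) = C * (1 - X * Y)"
      by (simp add: algebra_simps)
    finally show ?thesis
      by simp
  qed
  from this[OF nz] show ?thesis
    unfolding binoms pow qpoch_self_Suc .
next
  case False
  then consider "j = N" | "N < j"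
    by linarith
  then show ?thesis
    by cases (simp_all add: p)
qed

lemma qbinom_absorb:
  assumes p: "\<bar>p\<bar> \<noteq> 1"
  shows "(1 - p ^ (Suc N - j)) * qbinom (Suc N) j p = (1 - p ^ Suc N) * qbinom N j p"
proof (cases "j \<le> N")
  case True
  then obtain r where N: "N = j + r"
    using le_Suc_ex by blast
  have nz: "1 - p ^ Suc r \<noteq> 0"
    using power_Suc_neq_1[OF p] by auto
  have binoms: "qbinom (Suc N) j p = qpoch p p (Suc N) / (qpoch p p j * qpoch p p (Suc r))"
      "qbinom N j p = qpoch p p N / (qpoch p p j * qpoch p p r)"
    by (simp_all add: N qbinom_def gauss_binom_def Suc_diff_le)
  have "(1 - Y) * (C * Z / (A * (B * (1 - Y)))) = Z * (C / (A * B))"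
    if "1 - Y \<noteq> 0" for A B C Y Z :: real
    using that by simp
  moreover have "Suc N - j = Suc r"
    by (simp add: N)
  ultimately show ?thesis
    unfolding binoms qpoch_self_Suc using nz by simp
next
  case False
  then consider "j = Suc N" | "Suc N < j"
    by linarith
  then show ?thesis
    by cases simp_all
qed

lemma qbinom_three_term:
  assumes p: "\<bar>p\<bar> \<noteq> 1"
  shows "qbinom (N + 2) (Suc j) p
           = qbinom (N + 1) (Suc j) p + qbinom (N + 1) j p - (1 - p ^ (N + 1)) * qbinom N j p"
  using qbinom_Suc_Suc[OF p, of "N + 1" j] qbinom_absorb[OF p, of N j]
  by (simp add: algebra_simps)

definition rogers_szego :: "nat \<Rightarrow> real \<Rightarrow> real \<Rightarrow> real" where
  "rogers_szego N p z = (\<Sum>j\<le>N. qbinom N j p * z ^ j)"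

lemma rogers_szego_rec:
  assumes p: "\<bar>p\<bar> \<noteq> 1"
  shows "rogers_szego (N + 2) p z
           = (1 + z) * rogers_szego (N + 1) p z - z * (1 - p ^ (N + 1)) * rogers_szego N p z"
proof -
  let ?a = "\<lambda>j. qbinom (N + 1) j p * z ^ j" and ?b = "\<lambda>j. qbinom N j p * z ^ j"
  have "rogers_szego (N + 2) p z = 1 + (\<Sum>j\<le>N + 1. qbinom (N + 2) (Suc j) p * z ^ Suc j)"
    unfolding rogers_szego_def Suc_eq_plus1[symmetric] add_2_eq_Suc' sum.atMost_Suc_shift
    using p by simp
  also have "\<dots> = 1 + (\<Sum>j\<le>N + 1. ?a (Suc j)) + z * (\<Sum>j\<le>N + 1. ?a j)
                   - z * (1 - p ^ (N + 1)) * (\<Sum>j\<le>N + 1. ?b j)"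
  proof -
    have "qbinom (N + 2) (Suc j) p * z ^ Suc j = ?a (Suc j) + z * ?a j - z * (1 - p ^ (N + 1)) * ?b j"
      for j
      unfolding qbinom_three_term[OF p] by (simp add: algebra_simps)
    then show ?thesis
      by (simp only: sum.distrib sum_subtractf sum_distrib_left add.assoc)
  qed
  also have "1 + (\<Sum>j\<le>N + 1. ?a (Suc j)) = rogers_szego (N + 1) p z"
    unfolding rogers_szego_def using sum.atMost_Suc_shift[of ?a N] p by simp
  also have "(\<Sum>j\<le>N + 1. ?a j) = rogers_szego (N + 1) p z"
    by (simp add: rogers_szego_def)
  also have "(\<Sum>j\<le>N + 1. ?b j) = rogers_szego N p z"
    by (simp add: rogers_szego_def)
  finally show ?thesis
    by (simp add: algebra_simps)
qed

lemma tendsto_one_minus_power_div: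
  "((\<lambda>q::real. (1 - (-q) ^ a) / (1 + q)) \<longlongrightarrow> real a) (at (-1))"
proof -
  have "((\<lambda>q::real. \<Sum>i<a. (-q) ^ i) \<longlongrightarrow> (\<Sum>i<a. (-(-1::real)) ^ i)) (at (-1))"
    by (intro tendsto_intros)
  moreover have "(\<Sum>i<a. (-q) ^ i) = (1 - (-q) ^ a) / (1 + q)" if "q \<noteq> -1" for q :: real
    using one_diff_power_eq[of "-q" a] that by (simp add: field_simps)
  ultimately show ?thesis
    by (auto intro: Lim_transform_eventually simp: eventually_at_filter)
qed

lemma tendsto_one_minus_power_quotient:
  assumes "b > 0"
  shows "((\<lambda>q::real. (1 - (-q) ^ a) / (1 - (-q) ^ b)) \<longlongrightarrow> real a / real b) (at (-1))"
proof -
  have "((\<lambda>q::real. ((1 - (-q) ^ a) / (1 + q)) / ((1 - (-q) ^ b) / (1 + q))) \<longlongrightarrow> real a / real b) (at (-1))"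
    using assms by (intro tendsto_divide tendsto_one_minus_power_div) auto
  moreover have "((1 - (-q) ^ a) / (1 + q)) / ((1 - (-q) ^ b) / (1 + q)) = (1 - (-q) ^ a) / (1 - (-q) ^ b)"
    if "q \<noteq> -1" for q :: real
    using that by (simp add: divide_simps)
  ultimately show ?thesis
    by (auto intro: Lim_transform_eventually simp: eventually_at_filter)
qed

lemma eventually_abs_neq_1_at_minus_1: "\<forall>\<^sub>F q in at (-1). \<bar>q :: real\<bar> \<noteq> 1"
proof -
  have "\<forall>\<^sub>F q in nhds (-1). q \<in> {-2<..<0::real}"
    by (rule eventually_nhds_in_open) auto
  then show ?thesis
    unfolding eventually_at_filter by (rule eventually_mono) auto
qed

lemma one_plus_odd_power_nonzero: "\<bar>q :: real\<bar> \<noteq> 1 \<Longrightarrow> 1 + q ^ (2 * j + 1) \<noteq> 0"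
  using power_eq_1_iff[of "-q" "2 * j + 1"] by auto

lemma qpoch_minus_sq_Suc: "qpoch (-q) (q^2) (Suc n) = qpoch (-q) (q^2) n * (1 + q ^ (2 * n + 1))"
  by (simp add: qpoch_Suc power_mult[symmetric])

lemma qpoch_minus_sq_nonzero: "\<bar>q :: real\<bar> \<noteq> 1 \<Longrightarrow> qpoch (-q) (q^2) n \<noteq> 0"
  by (induction n) (simp_all add: qpoch_minus_sq_Suc one_plus_odd_power_nonzero[simplified])

lemma abs_power_even_neq_1: "k \<ge> 1 \<Longrightarrow> \<bar>q :: real\<bar> \<noteq> 1 \<Longrightarrow> \<bar>q ^ (2 * k)\<bar> \<noteq> 1"
  using power_eq_1_iff[of "\<bar>q\<bar>" "2 * k"] by (auto simp: power_abs)

definition rs_quotient :: "nat \<Rightarrow> nat \<Rightarrow> nat \<Rightarrow> nat \<Rightarrow> real \<Rightarrow> real" where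
  "rs_quotient m k N d q = rogers_szego N (q ^ (2 * k)) (q ^ (2 * m + 1)) / qpoch (-q) (q^2) d"

lemma rs_quotient_rec:
  assumes "k \<ge> 1" "\<bar>q\<bar> \<noteq> 1"
  shows "rs_quotient m k (Suc (Suc N)) (Suc d) q
           = (1 - (-q) ^ (2 * m + 1)) / (1 - (-q) ^ (2 * d + 1)) * rs_quotient m k (Suc N) d q
             + (-q) ^ (2 * m + 1) * ((1 - (-q) ^ (2 * k * (N + 1))) / (1 - (-q) ^ (2 * d + 1)))
               * rs_quotient m k N d q"
proof -
  let ?H = "\<lambda>N. rogers_szego N (q ^ (2 * k)) (q ^ (2 * m + 1))" and ?D = "qpoch (-q) (q^2) d"
  have regroup: "((1 + z) * A - z * P * B) / (D * c) = (1 - - z) / c * (A / D) + - z * (P / c) * (B / D)"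
    if "D \<noteq> 0" "c \<noteq> 0" for z P A B D c :: real
    using that by (simp add: field_simps)
  have "rs_quotient m k (Suc (Suc N)) (Suc d) q
          = ((1 + q ^ (2 * m + 1)) * ?H (N + 1) - q ^ (2 * m + 1) * (1 - (q ^ (2 * k)) ^ (N + 1)) * ?H N)
            / (?D * (1 + q ^ (2 * d + 1)))"
    unfolding rs_quotient_def qpoch_minus_sq_Suc
      rogers_szego_rec[OF abs_power_even_neq_1[OF assms], symmetric]
    by (simp add: numeral_2_eq_2)
  also have "\<dots> = (1 - - (q ^ (2 * m + 1))) / (1 + q ^ (2 * d + 1)) * (?H (N + 1) / ?D)
      + - (q ^ (2 * m + 1)) * ((1 - (q ^ (2 * k)) ^ (N + 1)) / (1 + q ^ (2 * d + 1))) * (?H N / ?D)"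
    using qpoch_minus_sq_nonzero[OF assms(2), of d] one_plus_odd_power_nonzero[OF assms(2), of d]
    by (rule regroup)
  also have "- (q ^ (2 * m + 1)) = (-q) ^ (2 * m + 1)"
    by simp
  also have "1 + q ^ (2 * d + 1) = 1 - (-q) ^ (2 * d + 1)"
    by simp
  also have "(q ^ (2 * k)) ^ (N + 1) = (-q) ^ (2 * k * (N + 1))"
    unfolding power_mult[of "-q" "2 * k"] by simp
  finally show ?thesis
    by (simp only: rs_quotient_def Suc_eq_plus1)
qed

lemma tendsto_rs_quotient_Suc_Suc:
  assumes k: "k \<ge> 1"
    and A: "(rs_quotient m k (Suc N) d \<longlongrightarrow> A) (at (-1))"
    and B: "(rs_quotient m k N d \<longlongrightarrow> B) (at (-1))"
  shows "(rs_quotient m k (Suc (Suc N)) (Suc d)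
           \<longlongrightarrow> real (2 * m + 1) / real (2 * d + 1) * A + real (2 * k * (N + 1)) / real (2 * d + 1) * B)
         (at (-1))"
proof -
  let ?f = "\<lambda>q. (1 - (-q) ^ (2 * m + 1)) / (1 - (-q) ^ (2 * d + 1)) * rs_quotient m k (Suc N) d q
             + (-q) ^ (2 * m + 1) * ((1 - (-q) ^ (2 * k * (N + 1))) / (1 - (-q) ^ (2 * d + 1)))
               * rs_quotient m k N d q"
  have "(?f \<longlongrightarrow> real (2 * m + 1) / real (2 * d + 1) * A
             + (- (- 1)) ^ (2 * m + 1) * (real (2 * k * (N + 1)) / real (2 * d + 1)) * B) (at (-1))"
    by (intro tendsto_intros tendsto_one_minus_power_quotient A B) simp_all
  then have "(?f \<longlongrightarrow> real (2 * m + 1) / real (2 * d + 1) * A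
                + real (2 * k * (N + 1)) / real (2 * d + 1) * B) (at (-1))"
    by simp
  moreover have "\<forall>\<^sub>F q in at (-1). ?f q = rs_quotient m k (Suc (Suc N)) (Suc d) q"
    by (rule eventually_mono[OF eventually_abs_neq_1_at_minus_1], rule sym, rule rs_quotient_rec[OF k])
  ultimately show ?thesis
    by (rule Lim_transform_eventually)
qed

lemma tendsto_rs_quotient_zero:
  assumes "(rs_quotient m k N (Suc d) \<longlongrightarrow> L) (at (-1))"
  shows "(rs_quotient m k N d \<longlongrightarrow> 0) (at (-1))"
proof -
  have "((\<lambda>q. rs_quotient m k N (Suc d) q * (1 + q ^ (2 * d + 1))) \<longlongrightarrow> L * (1 + (-1) ^ (2 * d + 1))) (at (-1))"
    by (intro tendsto_intros assms)
  moreover have "rs_quotient m k N (Suc d) q * (1 + q ^ (2 * d + 1)) = rs_quotient m k N d q"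
    if "\<bar>q\<bar> \<noteq> 1" for q :: real
    using one_plus_odd_power_nonzero[OF that, of d]
    by (simp add: rs_quotient_def qpoch_minus_sq_Suc)
  ultimately show ?thesis
    by (auto intro: Lim_transform_eventually eventually_mono[OF eventually_abs_neq_1_at_minus_1])
qed

lemma tendsto_rs_quotient:
  assumes k: "k \<ge> 1"
  shows "(rs_quotient m k (2 * n) n \<longlongrightarrow> (2 * real k) ^ n) (at (-1))
       \<and> (rs_quotient m k (2 * n + 1) (Suc n) \<longlongrightarrow> (2 * real k) ^ n * (2 * real m + 1)) (at (-1))"
proof (induction n)
  case 0
  have "\<forall>\<^sub>F q in at (-1). (1 - (-q) ^ (2 * m + 1)) / (1 - (-q) ^ 1) = rs_quotient m k 1 1 q"
    by (rule eventually_mono[OF eventually_abs_neq_1_at_minus_1])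
       (use abs_power_even_neq_1[OF k] in \<open>simp add: rs_quotient_def rogers_szego_def qpoch_def\<close>)
  with tendsto_one_minus_power_quotient[of 1 "2 * m + 1", OF zero_less_one]
  have "(rs_quotient m k 1 1 \<longlongrightarrow> real (2 * m + 1) / real 1) (at (-1))"
    by (rule Lim_transform_eventually)
  moreover have "rs_quotient m k 0 0 = (\<lambda>q. 1)"
    by (auto simp: rs_quotient_def rogers_szego_def qbinom_def gauss_binom_def)
  ultimately show ?case
    by (simp add: add.commute)
next
  case (Suc n)
  have lim_even: "(rs_quotient m k (Suc (Suc (2 * n))) (Suc n) \<longlongrightarrow> (2 * real k) ^ Suc n) (at (-1))"
  proof -
    have "(rs_quotient m k (Suc (Suc (2 * n))) (Suc n)
            \<longlongrightarrow> real (2 * m + 1) / real (2 * n + 1) * 0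
                + real (2 * k * (2 * n + 1)) / real (2 * n + 1) * (2 * real k) ^ n) (at (-1))"
      using Suc.IH by (intro tendsto_rs_quotient_Suc_Suc k tendsto_rs_quotient_zero[of m k _ n]) auto
    moreover have "real (2 * k * (2 * n + 1)) / real (2 * n + 1) = 2 * real k"
      by (subst of_nat_mult) simp
    ultimately show ?thesis
      by (simp only: mult_zero_right add_0_left power_Suc)
  qed
  have lim_odd: "(rs_quotient m k (Suc (Suc (Suc (2 * n)))) (Suc (Suc n))
               \<longlongrightarrow> (2 * real k) ^ Suc n * (2 * real m + 1)) (at (-1))"
  proof -
    have "(rs_quotient m k (Suc (Suc (Suc (2 * n)))) (Suc (Suc n))
            \<longlongrightarrow> real (2 * m + 1) / real (2 * Suc n + 1) * (2 * real k) ^ Suc n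
                + real (2 * k * (Suc (2 * n) + 1)) / real (2 * Suc n + 1) * ((2 * real k) ^ n * (2 * real m + 1)))
          (at (-1))"
      using Suc.IH lim_even by (intro tendsto_rs_quotient_Suc_Suc k) auto
    moreover have "real (2 * m + 1) / real (2 * Suc n + 1) * (2 * real k) ^ Suc n
                 + real (2 * k * (Suc (2 * n) + 1)) / real (2 * Suc n + 1) * ((2 * real k) ^ n * (2 * real m + 1))
        = (2 * real k) ^ Suc n * (2 * real m + 1)"
      by (simp add: divide_simps) (simp add: algebra_simps)
    ultimately show ?thesis
      by simp
  qed
  from lim_even lim_odd show ?case
    by simp
qed

lemma sum_gauss_binom_eq_rogers_szego:
  "(\<Sum>j=0..N. z ^ j * gauss_binom N j p) = rogers_szego N p z"
  unfolding rogers_szego_def atLeast0AtMost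
  by (rule sum.cong) (auto simp: qbinom_def)

theorem corollary2p4:
  fixes m k n :: nat
  assumes "k \<ge> 1"
  shows "((\<lambda>q::real. (\<Sum>j=0..2*n. q ^ ((2*m+1)*j) * gauss_binom (2*n) j (q ^ (2*k)))
                      / qpoch (-q) (q^2) n) \<longlongrightarrow> (2 * real k) ^ n) (at (-1))
     \<and> ((\<lambda>q::real. (\<Sum>j=0..2*n+1. q ^ ((2*m+1)*j) * gauss_binom (2*n+1) j (q ^ (2*k)))
                      / qpoch (-q) (q^2) (n+1)) \<longlongrightarrow> (2 * real k) ^ n * (2 * real m + 1)) (at (-1))"
proof -
  have quotient: "(\<lambda>q::real. (\<Sum>j=0..N. q ^ ((2*m+1)*j) * gauss_binom N j (q ^ (2*k)))
                    / qpoch (-q) (q^2) d) = rs_quotient m k N d" for N d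
    unfolding power_mult sum_gauss_binom_eq_rogers_szego rs_quotient_def ..
  show ?thesis
    unfolding quotient using tendsto_rs_quotient[OF assms, of m n] by simp
qed

end
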